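(* Let $x_0\in\mathbb{R}^d$ and let $K\subset\mathcal{D}_0$ be an OU set about $x_0$. Then $K$ is Lebesgue measurable; the closure $\bar K$ and the closure $\overline{K^\circ}$ of the interior of $K$ are also OU sets about $x_0$; and $\lambda(K^\circ)=\lambda(K)=\lambda(\bar K)$, where $\lambda$ is Lebesgue measure on $\mathbb{R}^d$.
   Context: For $x_0\in\mathbb{R}^d$, $\mathcal{D}_0=\{x\in\mathbb{R}^d: x\ge x_0\}$, with inequalities between vectors taken componentwise. A set $K\subset\mathcal{D}_0$ is called orthounimodal (OU) about $x_0$ if for every $x\in K$ and every $x'$ with $x\ge x'\ge x_0$ we have $x'\in K$. *)

theory Defs
  imports "HOL-Analysis.Analysis"
begin

definition cw_le :: "real ^ 'n \<Rightarrow> real ^ 'n \<Rightarrow> bool" where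
  "cw_le x y \<longleftrightarrow> (\<forall>i. x $ i \<le> y $ i)"

definition D0 :: "real ^ 'n \<Rightarrow> (real ^ 'n) set" where
  "D0 x0 = {x. cw_le x0 x}"

definition orthounimodal :: "real ^ 'n \<Rightarrow> (real ^ 'n) set \<Rightarrow> bool" where
  "orthounimodal x0 K \<longleftrightarrow> K \<subseteq> D0 x0 \<and>
     (\<forall>x\<in>K. \<forall>x'. cw_le x' x \<and> cw_le x0 x' \<longrightarrow> x' \<in> K)"

end

theory Submission
  imports Defs
begin

(* An orthounimodal set K is a union of boxes cbox x0 x, so it is squeezed between its interior
   and its closure, and both of these are again unions of such boxes.  Everything then rests on
   the frontier of K being negligible.  If z lies in the closure of K, the whole open box
   between x0 and z lies in the interior of K; hence every ray from x0 meets the frontier inside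
   the open orthant at most once, and the library's starlike negligibility criterion applies to
   the closed pieces of the frontier that stay a fixed distance above x0.  The remaining part of
   the frontier lies in the finitely many hyperplanes x $ i = x0 $ i. *)

lemma cw_le_iff_less_eq: "cw_le x y \<longleftrightarrow> x \<le> y"
  by (simp add: cw_le_def less_eq_vec_def)

lemma orthounimodal_iff: "orthounimodal x0 K \<longleftrightarrow> (\<forall>x\<in>K. x0 \<le> x \<and> cbox x0 x \<subseteq> K)"
  unfolding orthounimodal_def D0_def cw_le_iff_less_eq interval_cbox_cart[symmetric]
  by (auto simp: subset_iff)

lemma closed_atLeast_cart: "closed {a::real^'n..}"
  using closed_interval_right_cart[of a] by (simp add: atLeast_def less_eq_vec_def)

lemma orthounimodal_closure_subset_atLeast:
  fixes K :: "(real^'n) set"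
  assumes "orthounimodal x0 K"
  shows "closure K \<subseteq> {x0..}"
  using assms unfolding orthounimodal_iff by (intro closure_minimal closed_atLeast_cart) auto

lemma cbox_subset_closure:
  fixes S :: "(real^'n) set"
  assumes lower: "\<And>y. y \<in> S \<Longrightarrow> x0 \<le> y \<and> cbox x0 y \<subseteq> closure S"
    and "x \<in> closure S"
  shows "cbox x0 x \<subseteq> closure S"
proof
  fix x' assume "x' \<in> cbox x0 x"
  then have "x0 \<le> x'" "x' \<le> x" by (simp_all flip: interval_cbox_cart)
  (* The continuous map y \<mapsto> inf y x' sends x to x' and S into closure S. *)
  have cont: "continuous_on (closure S) (\<lambda>y. inf y x')"
    unfolding inf_vec_def inf_min
    by (intro continuous_on_vec_lambda continuous_on_min continuous_on_component
        continuous_on_id continuous_on_const)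
  have "(\<lambda>y. inf y x') ` S \<subseteq> closure S"
  proof
    fix z assume "z \<in> (\<lambda>y. inf y x') ` S"
    then obtain y where "y \<in> S" and z: "z = inf y x'" by blast
    then have "z \<in> cbox x0 y"
      using lower[of y] \<open>x0 \<le> x'\<close> by (simp add: z flip: interval_cbox_cart)
    then show "z \<in> closure S" using lower \<open>y \<in> S\<close> by blast
  qed
  then have "(\<lambda>y. inf y x') ` closure S \<subseteq> closure S"
    by (rule image_closure_subset[OF cont closed_closure])
  moreover have "inf x x' = x'"
    using \<open>x' \<le> x\<close> by (rule inf_absorb2)
  ultimately show "x' \<in> closure S"
    using \<open>x \<in> closure S\<close> by (metis image_subset_iff)
qed

lemma orthounimodal_closure:
  assumes "orthounimodal x0 K"
  shows "orthounimodal x0 (closure K)"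
  unfolding orthounimodal_iff
proof
  fix x assume x: "x \<in> closure K"
  have "cbox x0 x \<subseteq> closure K"
    by (rule cbox_subset_closure[OF _ x]) (use assms closure_subset in \<open>auto simp: orthounimodal_iff\<close>)
  then show "x0 \<le> x \<and> cbox x0 x \<subseteq> closure K"
    using orthounimodal_closure_subset_atLeast[OF assms] x by auto
qed

lemma orthounimodal_box_subset_interior:
  assumes "orthounimodal x0 K" and "z \<in> closure K"
  shows "box x0 z \<subseteq> interior K"
proof
  fix y assume y: "y \<in> box x0 z"
  have "z \<in> box y (z + 1)"
    using y by (simp add: mem_box_cart)
  then obtain w where "w \<in> K" "w \<in> box y (z + 1)"
    using \<open>z \<in> closure K\<close> open_Int_closure_eq_empty[OF open_box, of y "z + 1" K] by blast
  then have "y \<in> box x0 w"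
    using y by (simp add: mem_box_cart)
  moreover have "box x0 w \<subseteq> K"
    using assms(1) \<open>w \<in> K\<close> box_subset_cbox unfolding orthounimodal_iff by blast
  then have "box x0 w \<subseteq> interior K"
    by (intro interior_maximal open_box)
  ultimately show "y \<in> interior K" by blast
qed

lemma orthounimodal_interior_gt:
  fixes K :: "(real^'n) set"
  assumes "orthounimodal x0 K" and "y \<in> interior K"
  shows "x0 $ i < y $ i"
proof -
  obtain e where "e > 0" "ball y e \<subseteq> K"
    using assms(2) by (auto simp: mem_interior)
  then have "y - (e/2) *\<^sub>R axis i 1 \<in> K"
    by (auto simp: dist_norm)
  then have "x0 \<le> y - (e/2) *\<^sub>R axis i 1"
    using assms(1) by (auto simp: orthounimodal_iff)
  then show ?thesis
    using \<open>e > 0\<close> by (auto simp: less_eq_vec_def dest: spec[of _ i])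
qed

lemma orthounimodal_closure_interior:
  assumes "orthounimodal x0 K"
  shows "orthounimodal x0 (closure (interior K))"
  unfolding orthounimodal_iff
proof
  fix x assume x: "x \<in> closure (interior K)"
  have "cbox x0 x \<subseteq> closure (interior K)"
  proof (rule cbox_subset_closure[OF _ x])
    fix y assume y: "y \<in> interior K"
    have "box x0 y \<noteq> {}"
      using orthounimodal_interior_gt[OF assms y] by (simp add: interval_eq_empty_cart not_le)
    moreover have "box x0 y \<subseteq> interior K"
      using assms y interior_subset closure_subset by (intro orthounimodal_box_subset_interior) blast+
    ultimately have "cbox x0 y \<subseteq> closure (interior K)"
      by (metis closure_box closure_mono)
    moreover have "x0 \<le> y"
      using orthounimodal_interior_gt[OF assms y] by (simp add: less_eq_vec_def less_imp_le)
    ultimately show "x0 \<le> y \<and> cbox x0 y \<subseteq> closure (interior K)" by blast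
  qed
  moreover have "x0 \<le> x"
    using orthounimodal_closure_subset_atLeast[OF assms] closure_mono[OF interior_subset] x by blast
  ultimately show "x0 \<le> x \<and> cbox x0 x \<subseteq> closure (interior K)" by blast
qed

lemma orthounimodal_negligible_frontier_inter_atLeast:
  assumes ou: "orthounimodal x0 K" and b: "\<And>i. x0 $ i < b $ i"
  shows "negligible (frontier K \<inter> {b..})"
proof (rule starlike_negligible_strong[where a = x0])
  show "closed (frontier K \<inter> {b..})"
    by (simp add: closed_Int closed_atLeast_cart)
  fix c :: real and v
  assume c: "0 \<le> c" "c < 1" and v: "x0 + v \<in> frontier K \<inter> {b..}"
  show "x0 + c *\<^sub>R v \<notin> frontier K \<inter> {b..}"
  proof
    assume cv: "x0 + c *\<^sub>R v \<in> frontier K \<inter> {b..}"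
    have "0 < c * v $ i" for i
      using cv b[of i] by (auto simp: less_eq_vec_def dest: spec[of _ i])
    then have "x0 + c *\<^sub>R v \<in> box x0 (x0 + v)"
      using c by (auto simp: mem_box_cart zero_less_mult_iff)
    moreover have "box x0 (x0 + v) \<subseteq> interior K"
      using v by (intro orthounimodal_box_subset_interior[OF ou]) (auto simp: frontier_def)
    ultimately show False
      using cv by (auto simp: frontier_def)
  qed
qed

lemma negligible_hyperplane_cart: "negligible {x::real^'n. x $ i = c}"
proof -
  have "{x::real^'n. x $ i = c} = {x. x \<bullet> axis i 1 = c}"
    by (simp add: cart_eq_inner_axis)
  then show ?thesis
    by (simp add: negligible_standard_hyperplane axis_in_Basis_iff)
qed

lemma orthounimodal_frontier_subset:
  fixes K :: "(real^'n) set"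
  assumes ou: "orthounimodal x0 K"
  shows "frontier K \<subseteq> (\<Union>n. frontier K \<inter> {x0 + (\<chi> i. inverse (real (Suc n)))..})
      \<union> (\<Union>i. {x. x $ i = x0 $ i})"
proof
  fix x assume x: "x \<in> frontier K"
  then have "x0 \<le> x"
    using orthounimodal_closure_subset_atLeast[OF ou] by (auto simp: frontier_def)
  show "x \<in> (\<Union>n. frontier K \<inter> {x0 + (\<chi> i. inverse (real (Suc n)))..}) \<union> (\<Union>i. {x. x $ i = x0 $ i})"
  proof (cases "\<exists>i. x $ i = x0 $ i")
    case False
    with \<open>x0 \<le> x\<close> have "x0 $ i < x $ i" for i
      unfolding less_eq_vec_def by (metis order_le_less)
    then have "\<forall>\<^sub>F n in sequentially. \<forall>i. inverse (real (Suc n)) < x $ i - x0 $ i"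
      by (intro eventually_all_finite order_tendstoD(2)[OF LIMSEQ_inverse_real_of_nat]) simp
    then obtain n where "\<forall>i. inverse (real (Suc n)) < x $ i - x0 $ i"
      by (auto simp: eventually_sequentially)
    then have "x \<in> {x0 + (\<chi> i. inverse (real (Suc n)))..}"
      by (simp add: less_eq_vec_def) (metis add.commute less_diff_eq less_imp_le)
    then show ?thesis using x by blast
  qed auto
qed

lemma orthounimodal_negligible_frontier:
  assumes ou: "orthounimodal x0 K"
  shows "negligible (frontier K)"
proof (rule negligible_subset[OF _ orthounimodal_frontier_subset[OF ou]])
  have "x0 $ i < (x0 + (\<chi> i. inverse (real (Suc n)))) $ i" for i n
    by simp
  then show "negligible ((\<Union>n. frontier K \<inter> {x0 + (\<chi> i. inverse (real (Suc n)))..})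
      \<union> (\<Union>i. {x. x $ i = x0 $ i}))"
    by (intro negligible_Un negligible_Union_nat orthounimodal_negligible_frontier_inter_atLeast[OF ou]
        negligible_Union) (auto intro: negligible_hyperplane_cart)
qed

lemma lebesgue_sets_emeasure_between_interior_closure:
  fixes S T :: "'a::euclidean_space set"
  assumes "negligible (frontier S)" and "interior S \<subseteq> T" and "T \<subseteq> closure S"
  shows "T \<in> sets lebesgue \<and> emeasure lebesgue T = emeasure lebesgue (interior S)"
proof -
  have null: "T - interior S \<in> null_sets lebesgue"
    using assms by (metis Diff_mono frontier_def negligible_iff_null_sets negligible_subset order_refl)
  have T: "T = interior S \<union> (T - interior S)"
    using assms(2) by blast
  have open_sets: "interior S \<in> sets lebesgue"
    by (simp add: borel_open)
  have "T \<in> sets lebesgue"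
    by (subst T) (rule sets.Un[OF open_sets null_setsD2[OF null]])
  moreover have "emeasure lebesgue T = emeasure lebesgue (interior S)"
    by (subst T) (rule emeasure_Un_null_set[OF open_sets null])
  ultimately show ?thesis ..
qed

theorem mainTheorem1:
  fixes x0 :: "real ^ 'n" and K :: "(real ^ 'n) set"
  assumes "orthounimodal x0 K"
  shows "K \<in> sets lebesgue
    \<and> orthounimodal x0 (closure K)
    \<and> orthounimodal x0 (closure (interior K))
    \<and> emeasure lebesgue (interior K) = emeasure lebesgue K
    \<and> emeasure lebesgue K = emeasure lebesgue (closure K)"
proof -
  have "negligible (frontier K)"
    using orthounimodal_negligible_frontier[OF assms] .
  then have "K \<in> sets lebesgue \<and> emeasure lebesgue K = emeasure lebesgue (interior K)"
    and "closure K \<in> sets lebesgue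
      \<and> emeasure lebesgue (closure K) = emeasure lebesgue (interior K)"
    using interior_subset[of K] closure_subset[of K]
    by (intro lebesgue_sets_emeasure_between_interior_closure; blast)+
  then show ?thesis
    using orthounimodal_closure[OF assms] orthounimodal_closure_interior[OF assms] by simp
qed

end
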